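(* Let $R(s,t)=\mathbb{E}[I_n(f_s)I_n(f_t)]$ have finite 2D $\rho$-variation on $[0,1]^2$ for some $\rho\in[1,3/2)$ with $\|R\|^\rho_{\rho\text{-var};[s,t]\times[s,t]}\le|t-s|$ for all $0\le s\le t\le1$. Then for any $\varphi\in\mathcal{H}^{\hat\otimes n}$, the real function $\phi_t=\langle f_t,\varphi\rangle_{\mathcal{H}^{\otimes n}}$ has finite $\rho$-variation on $[0,1]$ and $$\|\phi\|_{\rho\text{-var};[0,1]}\le C\,\|\varphi\|_{\mathcal{H}^{\otimes n}}\sqrt{\|R\|_{\rho\text{-var};[0,1]^2}},$$ where $C$ is a constant not depending on $\varphi$.
   Context: $\mathcal{H}$ is a real separable Hilbert space with an isonormal Gaussian process $W$ on $(\Omega,\mathcal{F},\mathbb{P})$; $I_n$ is the $n$-th multiple Wiener–Itô integral ($n\ge1$ fixed), so $\mathbb{E}[I_n(f)I_n(g)]=n!\langle f,g\rangle_{\mathcal{H}^{\otimes n}}$; $(f_t)_{t\in[0,1]}\subset\mathcal{H}^{\hat\otimes n}$ (symmetric tensors). For $F:[0,1]^2\to\mathbb{R}$, $F([a,b]\times[c,d]):=F(b,d)-F(a,d)-F(b,c)+F(a,c)$ and $\|F\|_{\rho\text{-var};[s,t]\times[u,v]}:=\big(\sup\sum_{i,j}|F([t_i,t_{i+1}]\times[u_j,u_{j+1}])|^\rho\big)^{1/\rho}$ over partitions of $[s,t]$ and $[u,v]$. The one-dimensional $\rho$-variation is $\|\phi\|_{\rho\text{-var};[0,1]}=(\sup\sum_i|\phi_{t_{i+1}}-\phi_{t_i}|^\rho)^{1/\rho}$.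 *)

theory Defs
  imports "HOL-Analysis.Analysis"
begin

definition is_partition :: "real \<Rightarrow> real \<Rightarrow> nat \<Rightarrow> (nat \<Rightarrow> real) \<Rightarrow> bool" where
  "is_partition a b k t \<longleftrightarrow> t 0 = a \<and> t k = b \<and> (\<forall>i<k. t i \<le> t (Suc i))"

definition var1_sums :: "real \<Rightarrow> (real \<Rightarrow> real) \<Rightarrow> real \<Rightarrow> real \<Rightarrow> real set" where
  "var1_sums \<rho> \<phi> a b =
     {(\<Sum>i<k. \<bar>\<phi> (t (Suc i)) - \<phi> (t i)\<bar> powr \<rho>) | k t. is_partition a b k t}"

definition finite_var1 :: "real \<Rightarrow> (real \<Rightarrow> real) \<Rightarrow> real \<Rightarrow> real \<Rightarrow> bool" where
  "finite_var1 \<rho> \<phi> a b \<longleftrightarrow> bdd_above (var1_sums \<rho> \<phi> a b)"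

definition var1 :: "real \<Rightarrow> (real \<Rightarrow> real) \<Rightarrow> real \<Rightarrow> real \<Rightarrow> real" where
  "var1 \<rho> \<phi> a b = (Sup (var1_sums \<rho> \<phi> a b)) powr (1 / \<rho>)"

definition rect_incr :: "(real \<Rightarrow> real \<Rightarrow> real) \<Rightarrow> real \<Rightarrow> real \<Rightarrow> real \<Rightarrow> real \<Rightarrow> real" where
  "rect_incr F a b c d = F b d - F a d - F b c + F a c"

definition var2_sums :: "real \<Rightarrow> (real \<Rightarrow> real \<Rightarrow> real) \<Rightarrow> real \<Rightarrow> real \<Rightarrow> real \<Rightarrow> real \<Rightarrow> real set" where
  "var2_sums \<rho> F a b c d =
     {(\<Sum>i<k. \<Sum>j<l. \<bar>rect_incr F (t i) (t (Suc i)) (u j) (u (Suc j))\<bar> powr \<rho>)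
        | k t l u. is_partition a b k t \<and> is_partition c d l u}"

definition finite_var2 :: "real \<Rightarrow> (real \<Rightarrow> real \<Rightarrow> real) \<Rightarrow> real \<Rightarrow> real \<Rightarrow> real \<Rightarrow> real \<Rightarrow> bool" where
  "finite_var2 \<rho> F a b c d \<longleftrightarrow> bdd_above (var2_sums \<rho> F a b c d)"

definition var2 :: "real \<Rightarrow> (real \<Rightarrow> real \<Rightarrow> real) \<Rightarrow> real \<Rightarrow> real \<Rightarrow> real \<Rightarrow> real \<Rightarrow> real" where
  "var2 \<rho> F a b c d = (Sup (var2_sums \<rho> F a b c d)) powr (1 / \<rho>)"

end

theory Submission
  imports Defs
begin

(*
  Duality. Fix a partition, let d_i be the increments of phi_t = <f_t, phi> and x_i those
  of f. Testing phi against g = sum_i sgn(d_i) |d_i|^(rho-1) x_i gives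
  S := sum_i |d_i|^rho = <g, phi> <= |g| |phi|. Expanding |g|^2 over the Gram matrix
  <x_i, x_j>, whose entries are the rectangular increments of R divided by n!, Hoelder's
  inequality with exponents rho/(rho-1) and rho yields |g|^2 <= S^(2(rho-1)/rho) ||R||/n!,
  where ||R|| is the 2D rho-variation. Cancelling gives S^(1/rho) <= |phi| (||R||/n!)^(1/2),
  so C = 1/sqrt(n!) works.
*)

lemma Youngs_inequality_nonneg:
  fixes a b :: real
  assumes "0 \<le> a" "0 \<le> b" "0 \<le> \<theta>" "\<theta> \<le> 1"
  shows "a powr \<theta> * b powr (1 - \<theta>) \<le> \<theta> * a + (1 - \<theta>) * b"
proof (cases "a = 0 \<or> b = 0")
  case False
  with assms show ?thesis by (intro Youngs_inequality_0) auto
qed (use assms in auto)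

lemma Holder_sum_powr:
  fixes A B :: "'i \<Rightarrow> real"
  assumes "finite I" and A: "\<And>i. i \<in> I \<Longrightarrow> 0 \<le> A i" and B: "\<And>i. i \<in> I \<Longrightarrow> 0 \<le> B i"
    and "0 \<le> \<theta>" "\<theta> \<le> 1"
  shows "(\<Sum>i\<in>I. A i powr \<theta> * B i powr (1 - \<theta>))
           \<le> (\<Sum>i\<in>I. A i) powr \<theta> * (\<Sum>i\<in>I. B i) powr (1 - \<theta>)"
proof -
  define SA SB where "SA = (\<Sum>i\<in>I. A i)" and "SB = (\<Sum>i\<in>I. B i)"
  have "SA \<ge> 0" "SB \<ge> 0" unfolding SA_def SB_def using A B by (auto intro: sum_nonneg)
  show ?thesis
  proof (cases "SA = 0 \<or> SB = 0")
    case True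
    then have "\<forall>i\<in>I. A i = 0 \<or> B i = 0"
      using sum_nonneg_eq_0_iff[OF \<open>finite I\<close>] A B unfolding SA_def SB_def by blast
    then have "(\<Sum>i\<in>I. A i powr \<theta> * B i powr (1 - \<theta>)) = 0" by (intro sum.neutral) auto
    with True show ?thesis unfolding SA_def SB_def by auto
  next
    case False
    with \<open>SA \<ge> 0\<close> \<open>SB \<ge> 0\<close> have "SA > 0" "SB > 0" by auto
    have "A i powr \<theta> * B i powr (1 - \<theta>)
          = SA powr \<theta> * SB powr (1 - \<theta>) * ((A i / SA) powr \<theta> * (B i / SB) powr (1 - \<theta>))"
      if "i \<in> I" for i
      using that A B \<open>SA > 0\<close> \<open>SB > 0\<close> by (simp add: powr_divide)
    also have "\<dots> i \<le> SA powr \<theta> * SB powr (1 - \<theta>) * (\<theta> * (A i / SA) + (1 - \<theta>) * (B i / SB))"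
      if "i \<in> I" for i
      using that A B \<open>SA > 0\<close> \<open>SB > 0\<close> assms(4,5)
      by (intro mult_left_mono Youngs_inequality_nonneg) auto
    finally have "(\<Sum>i\<in>I. A i powr \<theta> * B i powr (1 - \<theta>))
        \<le> (\<Sum>i\<in>I. SA powr \<theta> * SB powr (1 - \<theta>) * (\<theta> * (A i / SA) + (1 - \<theta>) * (B i / SB)))"
      by (rule sum_mono)
    also have "\<dots> = SA powr \<theta> * SB powr (1 - \<theta>) * (\<theta> * (SA / SA) + (1 - \<theta>) * (SB / SB))"
      by (simp add: SA_def SB_def sum.distrib flip: sum_distrib_left sum_divide_distrib)
    also have "\<dots> = SA powr \<theta> * SB powr (1 - \<theta>)" using \<open>SA > 0\<close> \<open>SB > 0\<close> by simp
    finally show ?thesis unfolding SA_def SB_def .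
  qed
qed

lemma powr_le_of_le_powr_mult:
  fixes u c \<theta> :: real
  assumes "0 \<le> u" "0 \<le> c" "u \<le> u powr \<theta> * c"
  shows "u powr (1 - \<theta>) \<le> c"
proof (cases "u = 0")
  case False
  with assms have "u powr \<theta> * u powr (1 - \<theta>) \<le> u powr \<theta> * c"
    by (simp flip: powr_add)
  with False assms(1) show ?thesis by simp
qed (use assms in simp)

lemma power2_norm_sum_scaleR:
  fixes x :: "'i \<Rightarrow> 'a::real_inner"
  shows "(norm (\<Sum>i\<in>I. c i *\<^sub>R x i))\<^sup>2 = (\<Sum>i\<in>I. \<Sum>j\<in>I. c i * c j * (x i \<bullet> x j))"
  by (simp add: power2_norm_eq_inner inner_sum_left)
    (simp add: inner_sum_right sum_distrib_left mult.assoc)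

lemma sgn_mult_abs_powr_mult_self:
  fixes a p :: real
  shows "sgn a * \<bar>a\<bar> powr (p - 1) * a = \<bar>a\<bar> powr p"
proof -
  have "sgn a * \<bar>a\<bar> powr (p - 1) * a = \<bar>a\<bar> * \<bar>a\<bar> powr (p - 1)"
    by (simp add: abs_sgn)
  also have "\<dots> = \<bar>a\<bar> powr p" by (simp add: powr_mult_base)
  finally show ?thesis .
qed

lemma power2_norm_sum_sgn_powr_scaleR_le:
  fixes x :: "'i \<Rightarrow> 'a::real_inner" and a :: "'i \<Rightarrow> real"
  assumes "finite I" "1 \<le> \<rho>"
  shows "(norm (\<Sum>i\<in>I. (sgn (a i) * \<bar>a i\<bar> powr (\<rho> - 1)) *\<^sub>R x i))\<^sup>2
           \<le> ((\<Sum>i\<in>I. \<bar>a i\<bar> powr \<rho>)\<^sup>2) powr ((\<rho> - 1) / \<rho>)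
              * (\<Sum>i\<in>I. \<Sum>j\<in>I. \<bar>x i \<bullet> x j\<bar> powr \<rho>) powr (1 / \<rho>)"
    (is "(norm (\<Sum>i\<in>I. ?\<beta> i *\<^sub>R x i))\<^sup>2 \<le> ((?S)\<^sup>2) powr ?\<theta> * ?G powr _")
proof -
  have \<theta>: "0 \<le> ?\<theta>" "?\<theta> \<le> 1" "1 - ?\<theta> = 1 / \<rho>" "\<rho> * ?\<theta> = \<rho> - 1"
    using assms(2) by (auto simp: field_simps)
  define A B where "A = (\<lambda>(i, j). (\<bar>a i\<bar> * \<bar>a j\<bar>) powr \<rho>)"
    and "B = (\<lambda>(i, j). \<bar>x i \<bullet> x j\<bar> powr \<rho>)"
  have abs_\<beta>: "\<bar>?\<beta> i * ?\<beta> j * c\<bar> = (\<bar>a i\<bar> * \<bar>a j\<bar>) powr (\<rho> - 1) * \<bar>c\<bar>" for i j c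
    by (cases "a i = 0"; cases "a j = 0") (simp_all add: abs_mult powr_mult)
  have "(norm (\<Sum>i\<in>I. ?\<beta> i *\<^sub>R x i))\<^sup>2 = (\<Sum>i\<in>I. \<Sum>j\<in>I. ?\<beta> i * ?\<beta> j * (x i \<bullet> x j))"
    by (rule power2_norm_sum_scaleR)
  also have "\<dots> \<le> (\<Sum>i\<in>I. \<Sum>j\<in>I. \<bar>?\<beta> i * ?\<beta> j * (x i \<bullet> x j)\<bar>)"
    by (intro sum_mono abs_ge_self)
  also have "\<dots> = (\<Sum>i\<in>I. \<Sum>j\<in>I. (\<bar>a i\<bar> * \<bar>a j\<bar>) powr (\<rho> - 1) * \<bar>x i \<bullet> x j\<bar>)"
    by (simp only: abs_\<beta>)
  also have "\<dots> = (\<Sum>p\<in>I \<times> I. A p powr ?\<theta> * B p powr (1 - ?\<theta>))"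
    unfolding sum.cartesian_product A_def B_def using assms(2) \<theta>(3,4)
    by (simp add: split_def powr_powr)
  also have "\<dots> \<le> (\<Sum>p\<in>I \<times> I. A p) powr ?\<theta> * (\<Sum>p\<in>I \<times> I. B p) powr (1 - ?\<theta>)"
    using assms(1) \<theta>(1,2) by (intro Holder_sum_powr) (auto simp: A_def B_def)
  also have "\<dots> = ((?S)\<^sup>2) powr ?\<theta> * ?G powr (1 / \<rho>)"
    unfolding A_def B_def \<theta>(3) sum.cartesian_product[symmetric]
    by (simp add: power2_eq_square sum_product powr_mult)
  finally show ?thesis .
qed

lemma sum_abs_inner_powr_le_Gram:
  fixes x :: "'i \<Rightarrow> 'a::real_inner"
  assumes "finite I" "1 \<le> \<rho>"
  shows "(\<Sum>i\<in>I. \<bar>x i \<bullet> \<phi>\<bar> powr \<rho>) powr (1 / \<rho>)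
           \<le> norm \<phi> * sqrt ((\<Sum>i\<in>I. \<Sum>j\<in>I. \<bar>x i \<bullet> x j\<bar> powr \<rho>) powr (1 / \<rho>))"
proof -
  define a where "a i = x i \<bullet> \<phi>" for i
  define S G where "S = (\<Sum>i\<in>I. \<bar>a i\<bar> powr \<rho>)"
    and "G = (\<Sum>i\<in>I. \<Sum>j\<in>I. \<bar>x i \<bullet> x j\<bar> powr \<rho>)"
  define g where "g = (\<Sum>i\<in>I. (sgn (a i) * \<bar>a i\<bar> powr (\<rho> - 1)) *\<^sub>R x i)"
  have "0 \<le> S" unfolding S_def by (simp add: sum_nonneg)
  have "S = g \<bullet> \<phi>"
    by (simp add: S_def g_def a_def inner_sum_left sgn_mult_abs_powr_mult_self)
  then have "\<bar>S\<bar> \<le> norm g * norm \<phi>" by (simp add: Cauchy_Schwarz_ineq2)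
  from power_mono[OF this abs_ge_zero, of 2]
  have "S\<^sup>2 \<le> (norm g)\<^sup>2 * (norm \<phi>)\<^sup>2" by (simp add: power_mult_distrib)
  also have "\<dots> \<le> (S\<^sup>2) powr ((\<rho> - 1) / \<rho>) * G powr (1 / \<rho>) * (norm \<phi>)\<^sup>2"
    unfolding g_def S_def G_def using assms
    by (intro mult_right_mono power2_norm_sum_sgn_powr_scaleR_le) auto
  finally have "(S\<^sup>2) powr (1 - (\<rho> - 1) / \<rho>) \<le> G powr (1 / \<rho>) * (norm \<phi>)\<^sup>2"
    by (intro powr_le_of_le_powr_mult) (simp_all add: mult.assoc)
  moreover have "1 - (\<rho> - 1) / \<rho> = 1 / \<rho>" using assms(2) by (simp add: field_simps)
  moreover have "(S\<^sup>2) powr (1 / \<rho>) = (S powr (1 / \<rho>))\<^sup>2"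
    using \<open>0 \<le> S\<close> by (simp add: power2_eq_square powr_mult)
  ultimately have "S powr (1 / \<rho>) \<le> sqrt (G powr (1 / \<rho>) * (norm \<phi>)\<^sup>2)"
    by (simp add: real_le_rsqrt)
  then show ?thesis
    by (simp add: S_def G_def a_def real_sqrt_mult mult.commute)
qed

lemma is_partition_trivial: "a \<le> b \<Longrightarrow> is_partition a b 1 (\<lambda>i. if i = 0 then a else b)"
  by (simp add: is_partition_def)

lemma var1_le:
  assumes "a \<le> b" "0 < \<rho>"
    and bound: "\<And>k t. is_partition a b k t \<Longrightarrow>
                  (\<Sum>i<k. \<bar>\<phi> (t (Suc i)) - \<phi> (t i)\<bar> powr \<rho>) powr (1 / \<rho>) \<le> M"
  shows "finite_var1 \<rho> \<phi> a b" and "var1 \<rho> \<phi> a b \<le> M"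
proof -
  have sums_le: "S \<le> M powr \<rho>" and sums_nonneg: "0 \<le> S" if "S \<in> var1_sums \<rho> \<phi> a b" for S
  proof -
    from that obtain k t where S: "S = (\<Sum>i<k. \<bar>\<phi> (t (Suc i)) - \<phi> (t i)\<bar> powr \<rho>)"
      and "is_partition a b k t"
      unfolding var1_sums_def by blast
    then have "S powr (1 / \<rho>) \<le> M" by (simp add: bound)
    moreover show "0 \<le> S" unfolding S by (simp add: sum_nonneg)
    ultimately have "(S powr (1 / \<rho>)) powr \<rho> \<le> M powr \<rho>"
      using \<open>0 < \<rho>\<close> by (intro powr_mono2) auto
    with \<open>0 \<le> S\<close> \<open>0 < \<rho>\<close> show "S \<le> M powr \<rho>" by (simp add: powr_powr)
  qed
  have nonempty: "var1_sums \<rho> \<phi> a b \<noteq> {}"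
    using is_partition_trivial[OF \<open>a \<le> b\<close>] unfolding var1_sums_def by blast
  then obtain S where "S \<in> var1_sums \<rho> \<phi> a b" by blast
  have bdd: "bdd_above (var1_sums \<rho> \<phi> a b)" unfolding bdd_above_def using sums_le by blast
  then show "finite_var1 \<rho> \<phi> a b" by (simp add: finite_var1_def)
  have "0 \<le> Sup (var1_sums \<rho> \<phi> a b)"
    using \<open>S \<in> _\<close> sums_nonneg cSup_upper[OF _ bdd] by (meson order_trans)
  moreover have "Sup (var1_sums \<rho> \<phi> a b) \<le> M powr \<rho>"
    using nonempty sums_le by (rule cSup_least)
  ultimately have "var1 \<rho> \<phi> a b \<le> (M powr \<rho>) powr (1 / \<rho>)"
    unfolding var1_def using \<open>0 < \<rho>\<close> by (intro powr_mono2) auto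
  also have "\<dots> = M"
    using \<open>0 < \<rho>\<close> bound[OF is_partition_trivial[OF \<open>a \<le> b\<close>]] by (simp add: powr_powr)
  finally show "var1 \<rho> \<phi> a b \<le> M" .
qed

lemma var2_sums_powr_le_var2:
  assumes "finite_var2 \<rho> F a b c d" "0 < \<rho>" "is_partition a b k t" "is_partition c d l u"
  shows "(\<Sum>i<k. \<Sum>j<l. \<bar>rect_incr F (t i) (t (Suc i)) (u j) (u (Suc j))\<bar> powr \<rho>) powr (1 / \<rho>)
           \<le> var2 \<rho> F a b c d"
proof -
  have "(\<Sum>i<k. \<Sum>j<l. \<bar>rect_incr F (t i) (t (Suc i)) (u j) (u (Suc j))\<bar> powr \<rho>)
          \<le> Sup (var2_sums \<rho> F a b c d)"
    using assms(1,3,4) unfolding finite_var2_def var2_sums_def by (intro cSup_upper) blast+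
  then show ?thesis
    unfolding var2_def using assms(2) by (intro powr_mono2) (simp_all add: sum_nonneg)
qed

lemma var1_inner_le_var2:
  fixes f :: "real \<Rightarrow> 'a::real_inner"
  assumes R: "\<And>s t. R s t = c * (f s \<bullet> f t)" and "0 < c" "1 \<le> \<rho>" "a \<le> b"
    and R_finite: "finite_var2 \<rho> R a b a b"
  shows "finite_var1 \<rho> (\<lambda>t. f t \<bullet> \<phi>) a b"
    and "var1 \<rho> (\<lambda>t. f t \<bullet> \<phi>) a b \<le> norm \<phi> * sqrt (var2 \<rho> R a b a b / c)"
proof -
  have partition_bound: "(\<Sum>i<k. \<bar>f (t (Suc i)) \<bullet> \<phi> - f (t i) \<bullet> \<phi>\<bar> powr \<rho>) powr (1 / \<rho>)
          \<le> norm \<phi> * sqrt (var2 \<rho> R a b a b / c)"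
    if partition: "is_partition a b k t" for k t
  proof -
    define x where "x i = f (t (Suc i)) - f (t i)" for i
    have "rect_incr R (t i) (t (Suc i)) (t j) (t (Suc j)) = c * (x i \<bullet> x j)" for i j
      by (simp add: rect_incr_def R x_def inner_diff algebra_simps)
    then have "(\<Sum>i<k. \<Sum>j<k. \<bar>rect_incr R (t i) (t (Suc i)) (t j) (t (Suc j))\<bar> powr \<rho>)
                 = c powr \<rho> * (\<Sum>i<k. \<Sum>j<k. \<bar>x i \<bullet> x j\<bar> powr \<rho>)"
      using \<open>0 < c\<close> by (simp add: abs_mult powr_mult sum_distrib_left)
    then have "c * (\<Sum>i<k. \<Sum>j<k. \<bar>x i \<bullet> x j\<bar> powr \<rho>) powr (1 / \<rho>) \<le> var2 \<rho> R a b a b"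
      using var2_sums_powr_le_var2[OF R_finite _ partition partition] \<open>0 < c\<close> \<open>1 \<le> \<rho>\<close>
      by (simp add: powr_mult powr_powr sum_nonneg)
    then have "(\<Sum>i<k. \<Sum>j<k. \<bar>x i \<bullet> x j\<bar> powr \<rho>) powr (1 / \<rho>) \<le> var2 \<rho> R a b a b / c"
      using \<open>0 < c\<close> by (simp add: field_simps)
    then have "norm \<phi> * sqrt ((\<Sum>i<k. \<Sum>j<k. \<bar>x i \<bullet> x j\<bar> powr \<rho>) powr (1 / \<rho>))
                 \<le> norm \<phi> * sqrt (var2 \<rho> R a b a b / c)"
      by (intro mult_left_mono real_sqrt_le_mono) simp_all
    with sum_abs_inner_powr_le_Gram[of "{..<k}" \<rho> x \<phi>] \<open>1 \<le> \<rho>\<close> show ?thesis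
      by (simp add: x_def inner_diff_left)
  qed
  have "0 < \<rho>" using \<open>1 \<le> \<rho>\<close> by simp
  show "finite_var1 \<rho> (\<lambda>t. f t \<bullet> \<phi>) a b"
    by (rule var1_le(1)[OF \<open>a \<le> b\<close> \<open>0 < \<rho>\<close>]) (rule partition_bound)
  show "var1 \<rho> (\<lambda>t. f t \<bullet> \<phi>) a b \<le> norm \<phi> * sqrt (var2 \<rho> R a b a b / c)"
    by (rule var1_le(2)[OF \<open>a \<le> b\<close> \<open>0 < \<rho>\<close>]) (rule partition_bound)
qed

theorem mainTheorem2:
  fixes n :: nat and \<rho> :: real
    and f :: "real \<Rightarrow> 'a::{real_inner, complete_space}"
    and R :: "real \<Rightarrow> real \<Rightarrow> real"
  assumes n: "n \<ge> 1"
    and R_def: "\<And>s t. R s t = fact n * inner (f s) (f t)"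
    and rho: "1 \<le> \<rho>" "\<rho> < 3 / 2"
    and Rfin: "finite_var2 \<rho> R 0 1 0 1"
    and Rctrl: "\<And>s t. 0 \<le> s \<Longrightarrow> s \<le> t \<Longrightarrow> t \<le> 1 \<Longrightarrow>
                 (var2 \<rho> R s t s t) powr \<rho> \<le> \<bar>t - s\<bar>"
  shows "\<exists>C. \<forall>\<phi> :: 'a.
           finite_var1 \<rho> (\<lambda>t. inner (f t) \<phi>) 0 1 \<and>
           var1 \<rho> (\<lambda>t. inner (f t) \<phi>) 0 1 \<le> C * norm \<phi> * sqrt (var2 \<rho> R 0 1 0 1)"
proof (intro exI allI conjI)
  fix \<phi> :: 'a
  have "0 < (fact n :: real)" by simp
  note var1_bounds = var1_inner_le_var2[OF R_def this rho(1) _ Rfin, of \<phi>]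
  show "finite_var1 \<rho> (\<lambda>t. f t \<bullet> \<phi>) 0 1" using var1_bounds(1) by simp
  show "var1 \<rho> (\<lambda>t. f t \<bullet> \<phi>) 0 1 \<le> 1 / sqrt (fact n) * norm \<phi> * sqrt (var2 \<rho> R 0 1 0 1)"
    using var1_bounds(2) by (simp add: real_sqrt_divide)
qed

end
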